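(* Let $R$ be a ring with unit and $C$ an arbitrary chain complex of $R$-modules. (1) Let $h \colon C \to C$ be a chain map. Then the induced map $h_* \colon T(h) \to T(h)$ is chain homotopic to the map "multiplication by $x$" on $T(h)$; in particular $h_*$ is a quasi-isomorphism. (2) Let $g, h \colon C \to C$ be chain homotopic chain maps. Then the mapping tori $T(g)$ and $T(h)$ are isomorphic chain complexes of $R[x,x^{-1}]$-modules.
   Context: For a chain map $f \colon C \to B$, the mapping cone is $\mathrm{Cone}(f)_k = C_{k-1} \oplus B_k$ with differential $(c,b) \mapsto (-\partial c, f(c) + \partial b)$. For a chain map $h \colon C \to C$ of $R$-module complexes, the algebraic mapping torus is the $R[x,x^{-1}]$-module chain complex $T(h) = \mathrm{Cone}\big( h \otimes 1 - 1 \otimes x \colon C \otimes_R R[x,x^{-1}] \to C \otimes_R R[x,x^{-1}] \big)$, where $1 \otimes x$ is right multiplication by $x$ on the second factor. A commutative square $\alpha f = g \alpha$ with $f \colon C \to C$, $g \colon D \to D$, $\alpha \colon C \to D$ induces the $R[x,x^{-1}]$-linear chain map $\alpha_* \colon T(f) \to T(g)$ given by $\alpha \otimes 1$ on both summands; in (1), $h_*$ is the map induced by the square with $\alpha = f = g = h$. *)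

theory Defs
  imports Main "HOL-Library.Poly_Mapping" "HOL-Library.Product_Plus"
begin

text \<open>Laurent polynomial ring R[x,x^-1] is the group ring of the integers over R,
  realised as finitely supported functions int =>0 'r with convolution product.\<close>

type_synonym 'r laurent = "int \<Rightarrow>\<^sub>0 'r"

definition lx :: "'r::ring_1 laurent" where
  "lx = Poly_Mapping.single 1 1"

definition lmodule :: "('s::ring_1 \<Rightarrow> 'm::ab_group_add \<Rightarrow> 'm) \<Rightarrow> 'm set \<Rightarrow> bool" where
  "lmodule sc M \<longleftrightarrow>
     0 \<in> M \<and> (\<forall>x\<in>M. \<forall>y\<in>M. x + y \<in> M) \<and> (\<forall>x\<in>M. - x \<in> M) \<and>
     (\<forall>a. \<forall>x\<in>M. sc a x \<in> M) \<and>
     (\<forall>a. \<forall>x\<in>M. \<forall>y\<in>M. sc a (x + y) = sc a x + sc a y) \<and>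
     (\<forall>a b. \<forall>x\<in>M. sc (a + b) x = sc a x + sc b x) \<and>
     (\<forall>a b. \<forall>x\<in>M. sc (a * b) x = sc a (sc b x)) \<and>
     (\<forall>x\<in>M. sc 1 x = x)"

definition linear_on :: "('s::ring_1 \<Rightarrow> 'm::ab_group_add \<Rightarrow> 'm) \<Rightarrow> ('s \<Rightarrow> 'n::ab_group_add \<Rightarrow> 'n)
    \<Rightarrow> 'm set \<Rightarrow> 'n set \<Rightarrow> ('m \<Rightarrow> 'n) \<Rightarrow> bool" where
  "linear_on sc sc' A B f \<longleftrightarrow>
     (\<forall>x\<in>A. f x \<in> B) \<and> (\<forall>x\<in>A. \<forall>y\<in>A. f (x + y) = f x + f y) \<and>
     (\<forall>a. \<forall>x\<in>A. f (sc a x) = sc' a (f x))"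

definition chain_complex :: "('s::ring_1 \<Rightarrow> 'm::ab_group_add \<Rightarrow> 'm) \<Rightarrow> (int \<Rightarrow> 'm set)
    \<Rightarrow> (int \<Rightarrow> 'm \<Rightarrow> 'm) \<Rightarrow> bool" where
  "chain_complex sc C d \<longleftrightarrow>
     (\<forall>k. lmodule sc (C k)) \<and> (\<forall>k. linear_on sc sc (C k) (C (k - 1)) (d k)) \<and>
     (\<forall>k. \<forall>x\<in>C k. d (k - 1) (d k x) = 0)"

definition chain_map :: "('s::ring_1 \<Rightarrow> 'm::ab_group_add \<Rightarrow> 'm) \<Rightarrow> ('s \<Rightarrow> 'n::ab_group_add \<Rightarrow> 'n)
    \<Rightarrow> (int \<Rightarrow> 'm set) \<Rightarrow> (int \<Rightarrow> 'm \<Rightarrow> 'm) \<Rightarrow> (int \<Rightarrow> 'n set) \<Rightarrow> (int \<Rightarrow> 'n \<Rightarrow> 'n)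
    \<Rightarrow> (int \<Rightarrow> 'm \<Rightarrow> 'n) \<Rightarrow> bool" where
  "chain_map sc sc' C d D e f \<longleftrightarrow>
     (\<forall>k. linear_on sc sc' (C k) (D k) (f k)) \<and>
     (\<forall>k. \<forall>x\<in>C k. e k (f k x) = f (k - 1) (d k x))"

definition chain_homotopic :: "('s::ring_1 \<Rightarrow> 'm::ab_group_add \<Rightarrow> 'm) \<Rightarrow> ('s \<Rightarrow> 'n::ab_group_add \<Rightarrow> 'n)
    \<Rightarrow> (int \<Rightarrow> 'm set) \<Rightarrow> (int \<Rightarrow> 'm \<Rightarrow> 'm) \<Rightarrow> (int \<Rightarrow> 'n set) \<Rightarrow> (int \<Rightarrow> 'n \<Rightarrow> 'n)
    \<Rightarrow> (int \<Rightarrow> 'm \<Rightarrow> 'n) \<Rightarrow> (int \<Rightarrow> 'm \<Rightarrow> 'n) \<Rightarrow> bool" where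
  "chain_homotopic sc sc' C d D e f g \<longleftrightarrow>
     chain_map sc sc' C d D e f \<and> chain_map sc sc' C d D e g \<and>
     (\<exists>s. (\<forall>k. linear_on sc sc' (C k) (D (k + 1)) (s k)) \<and>
          (\<forall>k. \<forall>x\<in>C k. f k x - g k x = e (k + 1) (s k x) + s (k - 1) (d k x)))"

text \<open>Quasi-isomorphism: a chain map whose induced map
  H_k(C) = ker d_k / im d_(k+1)  ->  H_k(D) is bijective for every k
  (surjectivity and injectivity of the induced map on homology, unfolded).\<close>

definition quasi_iso :: "('s::ring_1 \<Rightarrow> 'm::ab_group_add \<Rightarrow> 'm) \<Rightarrow> ('s \<Rightarrow> 'n::ab_group_add \<Rightarrow> 'n)
    \<Rightarrow> (int \<Rightarrow> 'm set) \<Rightarrow> (int \<Rightarrow> 'm \<Rightarrow> 'm) \<Rightarrow> (int \<Rightarrow> 'n set) \<Rightarrow> (int \<Rightarrow> 'n \<Rightarrow> 'n)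
    \<Rightarrow> (int \<Rightarrow> 'm \<Rightarrow> 'n) \<Rightarrow> bool" where
  "quasi_iso sc sc' C d D e f \<longleftrightarrow>
     chain_map sc sc' C d D e f \<and>
     (\<forall>k. \<forall>z\<in>D k. e k z = 0 \<longrightarrow>
          (\<exists>w\<in>C k. d k w = 0 \<and> (\<exists>y\<in>D (k + 1). f k w - z = e (k + 1) y))) \<and>
     (\<forall>k. \<forall>w\<in>C k. d k w = 0 \<longrightarrow> (\<exists>y\<in>D (k + 1). f k w = e (k + 1) y) \<longrightarrow>
          (\<exists>u\<in>C (k + 1). w = d (k + 1) u))"

definition chain_iso :: "('s::ring_1 \<Rightarrow> 'm::ab_group_add \<Rightarrow> 'm) \<Rightarrow> ('s \<Rightarrow> 'n::ab_group_add \<Rightarrow> 'n)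
    \<Rightarrow> (int \<Rightarrow> 'm set) \<Rightarrow> (int \<Rightarrow> 'm \<Rightarrow> 'm) \<Rightarrow> (int \<Rightarrow> 'n set) \<Rightarrow> (int \<Rightarrow> 'n \<Rightarrow> 'n) \<Rightarrow> bool" where
  "chain_iso sc sc' C d D e \<longleftrightarrow>
     (\<exists>f g. chain_map sc sc' C d D e f \<and> chain_map sc' sc D e C d g \<and>
        (\<forall>k. \<forall>x\<in>C k. g k (f k x) = x) \<and> (\<forall>k. \<forall>y\<in>D k. f k (g k y) = y))"

definition cone_C :: "(int \<Rightarrow> 'm set) \<Rightarrow> (int \<Rightarrow> 'm set) \<Rightarrow> int \<Rightarrow> ('m \<times> 'm) set" where
  "cone_C C B k = C (k - 1) \<times> B k"

definition cone_d :: "(int \<Rightarrow> 'm::ab_group_add \<Rightarrow> 'm) \<Rightarrow> (int \<Rightarrow> 'm \<Rightarrow> 'm) \<Rightarrow> (int \<Rightarrow> 'm \<Rightarrow> 'm)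
    \<Rightarrow> int \<Rightarrow> 'm \<times> 'm \<Rightarrow> 'm \<times> 'm" where
  "cone_d d e f k cb = (- d (k - 1) (fst cb), f (k - 1) (fst cb) + e k (snd cb))"

text \<open>Base change C (x)_R R[x,x^-1]: in degree k, Laurent polynomials with
  coefficients in C_k (sum_n c_n x^n), with the R[x,x^-1]-action
  (p . f)_n = sum_(i+j=n) p_i . f_j.\<close>

definition LC :: "(int \<Rightarrow> 'm::zero set) \<Rightarrow> int \<Rightarrow> (int \<Rightarrow>\<^sub>0 'm) set" where
  "LC C k = {f. \<forall>n. Poly_Mapping.lookup f n \<in> C k}"

definition lsc :: "('r::ring_1 \<Rightarrow> 'm::ab_group_add \<Rightarrow> 'm) \<Rightarrow> 'r laurent \<Rightarrow> (int \<Rightarrow>\<^sub>0 'm) \<Rightarrow> (int \<Rightarrow>\<^sub>0 'm)" where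
  "lsc sc p f = (\<Sum>i\<in>Poly_Mapping.keys p. \<Sum>j\<in>Poly_Mapping.keys f. Poly_Mapping.single (i + j) (sc (Poly_Mapping.lookup p i) (Poly_Mapping.lookup f j)))"

text \<open>alpha (x) 1, applied coefficientwise.\<close>

definition lmap :: "('m::zero \<Rightarrow> 'n::zero) \<Rightarrow> (int \<Rightarrow>\<^sub>0 'm) \<Rightarrow> (int \<Rightarrow>\<^sub>0 'n)" where
  "lmap a f = Poly_Mapping.map a f"

text \<open>Algebraic mapping torus T(h) = Cone(h (x) 1 - 1 (x) x).\<close>

definition torus_C :: "(int \<Rightarrow> 'm::zero set) \<Rightarrow> int \<Rightarrow> ((int \<Rightarrow>\<^sub>0 'm) \<times> (int \<Rightarrow>\<^sub>0 'm)) set" where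
  "torus_C C = cone_C (LC C) (LC C)"

definition torus_d :: "('r::ring_1 \<Rightarrow> 'm::ab_group_add \<Rightarrow> 'm) \<Rightarrow> (int \<Rightarrow> 'm \<Rightarrow> 'm) \<Rightarrow> (int \<Rightarrow> 'm \<Rightarrow> 'm)
    \<Rightarrow> int \<Rightarrow> (int \<Rightarrow>\<^sub>0 'm) \<times> (int \<Rightarrow>\<^sub>0 'm) \<Rightarrow> (int \<Rightarrow>\<^sub>0 'm) \<times> (int \<Rightarrow>\<^sub>0 'm)" where
  "torus_d sc d h = cone_d (\<lambda>k. lmap (d k)) (\<lambda>k. lmap (d k))
                           (\<lambda>k c. lmap (h k) c - lsc sc lx c)"

definition tsc :: "('r::ring_1 \<Rightarrow> 'm::ab_group_add \<Rightarrow> 'm) \<Rightarrow> 'r laurent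
    \<Rightarrow> (int \<Rightarrow>\<^sub>0 'm) \<times> (int \<Rightarrow>\<^sub>0 'm) \<Rightarrow> (int \<Rightarrow>\<^sub>0 'm) \<times> (int \<Rightarrow>\<^sub>0 'm)" where
  "tsc sc p cb = (lsc sc p (fst cb), lsc sc p (snd cb))"

text \<open>Map alpha_* : T(f) -> T(g) induced by a commutative square: alpha (x) 1 on both summands.\<close>

definition torus_ind :: "(int \<Rightarrow> 'm::zero \<Rightarrow> 'm) \<Rightarrow> int
    \<Rightarrow> (int \<Rightarrow>\<^sub>0 'm) \<times> (int \<Rightarrow>\<^sub>0 'm) \<Rightarrow> (int \<Rightarrow>\<^sub>0 'm) \<times> (int \<Rightarrow>\<^sub>0 'm)" where
  "torus_ind a k cb = (lmap (a (k - 1)) (fst cb), lmap (a k) (snd cb))"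

end

theory Submission
  imports Defs
begin

text \<open>
  The torus T(h) is the mapping cone of \<phi> = h \<otimes> 1 - 1 \<otimes> x on the base change C \<otimes> R[x,x^-1].
  On any cone Cone(\<phi>) the map induced by \<phi> itself is null-homotopic, via (c, b) \<mapsto> (b, 0); and
  the map of T(h) induced by \<phi> is h_* - x. Hence h_* \<simeq> x, and since x is a central unit,
  multiplication by x is a chain automorphism; a chain map homotopic to an isomorphism is a
  quasi-isomorphism.

  For (2), a homotopy g - h = \<partial>s + s\<partial> base-changes to a homotopy between g \<otimes> 1 - 1 \<otimes> x and
  h \<otimes> 1 - 1 \<otimes> x, and for homotopic maps the shear (c, b) \<mapsto> (c, b + s c) is an isomorphism of
  their cones, with inverse the shear by -s.
\<close>

section \<open>Modules and linear maps\<close>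

lemma lmodule_closed:
  assumes "lmodule sc M"
  shows lmodule_zero: "0 \<in> M"
    and lmodule_add: "x \<in> M \<Longrightarrow> y \<in> M \<Longrightarrow> x + y \<in> M"
    and lmodule_uminus: "x \<in> M \<Longrightarrow> - x \<in> M"
    and lmodule_diff: "x \<in> M \<Longrightarrow> y \<in> M \<Longrightarrow> x - y \<in> M"
    and lmodule_scale: "x \<in> M \<Longrightarrow> sc a x \<in> M"
  using assms unfolding lmodule_def by (metis diff_conv_add_uminus)+

lemma lmodule_sum: "lmodule sc M \<Longrightarrow> (\<And>i. i \<in> I \<Longrightarrow> g i \<in> M) \<Longrightarrow> sum g I \<in> M"
  by (induction I rule: infinite_finite_induct) (auto intro: lmodule_closed)

lemma lmodule_scale_add:
  "lmodule sc M \<Longrightarrow> x \<in> M \<Longrightarrow> y \<in> M \<Longrightarrow> sc a (x + y) = sc a x + sc a y"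
  by (simp add: lmodule_def)

lemma lmodule_add_scale: "lmodule sc M \<Longrightarrow> x \<in> M \<Longrightarrow> sc (a + b) x = sc a x + sc b x"
  by (simp add: lmodule_def)

lemma lmodule_mult_scale: "lmodule sc M \<Longrightarrow> x \<in> M \<Longrightarrow> sc (a * b) x = sc a (sc b x)"
  by (simp add: lmodule_def)

lemma lmodule_one_scale: "lmodule sc M \<Longrightarrow> x \<in> M \<Longrightarrow> sc 1 x = x"
  by (simp add: lmodule_def)

lemma lmodule_scale_zero: "lmodule sc M \<Longrightarrow> sc a 0 = 0"
  using lmodule_scale_add[of sc M 0 0 a] by (simp add: lmodule_zero)

lemma lmodule_zero_scale: "lmodule sc M \<Longrightarrow> x \<in> M \<Longrightarrow> sc 0 x = 0"
  using lmodule_add_scale[of sc M x 0 0] by simp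

lemma lmodule_scale_diff:
  assumes "lmodule sc M" "x \<in> M" "y \<in> M"
  shows "sc a (x - y) = sc a x - sc a y"
  using lmodule_scale_add[OF assms(1) lmodule_diff[OF assms] assms(3), of a] by simp

lemma lmodule_scale_inverse:
  "lmodule sc M \<Longrightarrow> x \<in> M \<Longrightarrow> a * b = 1 \<Longrightarrow> sc a (sc b x) = x"
  by (metis lmodule_mult_scale lmodule_one_scale)

lemma linear_on_apply:
  assumes "linear_on sc sc' A B f"
  shows linear_on_in: "x \<in> A \<Longrightarrow> f x \<in> B"
    and linear_on_add: "x \<in> A \<Longrightarrow> y \<in> A \<Longrightarrow> f (x + y) = f x + f y"
    and linear_on_scale: "x \<in> A \<Longrightarrow> f (sc a x) = sc' a (f x)"
  using assms by (simp_all add: linear_on_def)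

lemma linear_on_diff:
  assumes "linear_on sc sc' A B f" "lmodule sc A" "x \<in> A" "y \<in> A"
  shows "f (x - y) = f x - f y"
  using linear_on_add[OF assms(1) lmodule_diff[OF assms(2-4)] assms(4)] by simp

lemma linear_on_zero: "linear_on sc sc' A B f \<Longrightarrow> lmodule sc A \<Longrightarrow> f 0 = 0"
  using linear_on_diff[of sc sc' A B f 0 0] by (simp add: lmodule_zero)

lemma linear_on_uminus:
  "linear_on sc sc' A B f \<Longrightarrow> lmodule sc A \<Longrightarrow> x \<in> A \<Longrightarrow> f (- x) = - f x"
  using linear_on_diff[of sc sc' A B f 0 x] by (simp add: lmodule_zero linear_on_zero)

lemma linear_on_sum:
  assumes "linear_on sc sc' A B f" "lmodule sc A" "\<And>i. i \<in> I \<Longrightarrow> g i \<in> A"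
  shows "f (sum g I) = (\<Sum>i\<in>I. f (g i))"
  using assms(3)
proof (induction I rule: infinite_finite_induct)
  case (insert i I)
  then show ?case
    by (simp add: linear_on_add[OF assms(1)] lmodule_sum[OF assms(2)])
qed (simp_all add: linear_on_zero[OF assms(1,2)])

section \<open>Base change to Laurent polynomials\<close>

lemma LC_iff: "f \<in> LC C k \<longleftrightarrow> (\<forall>n. Poly_Mapping.lookup f n \<in> C k)"
  by (simp add: LC_def)

lemma lookup_lsc_superset:
  assumes M: "lmodule sc M" and f: "\<And>n. Poly_Mapping.lookup f n \<in> M"
    and S: "finite S" "Poly_Mapping.keys p \<subseteq> S"
  shows "Poly_Mapping.lookup (lsc sc p f) n
    = (\<Sum>i\<in>S. sc (Poly_Mapping.lookup p i) (Poly_Mapping.lookup f (n - i)))"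
proof -
  have "Poly_Mapping.lookup (lsc sc p f) n = (\<Sum>i\<in>Poly_Mapping.keys p. \<Sum>j\<in>Poly_Mapping.keys f.
      if j = n - i then sc (Poly_Mapping.lookup p i) (Poly_Mapping.lookup f j) else 0)"
    unfolding lsc_def lookup_sum lookup_single when_def by (intro sum.cong) auto
  also have "\<dots> = (\<Sum>i\<in>Poly_Mapping.keys p.
      sc (Poly_Mapping.lookup p i) (Poly_Mapping.lookup f (n - i)))"
    by (intro sum.cong) (auto simp: in_keys_iff lmodule_scale_zero[OF M])
  also have "\<dots> = (\<Sum>i\<in>S. sc (Poly_Mapping.lookup p i) (Poly_Mapping.lookup f (n - i)))"
    using S by (intro sum.mono_neutral_left) (auto simp: in_keys_iff f lmodule_zero_scale[OF M])
  finally show ?thesis .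
qed

lemma lookup_lsc:
  "lmodule sc M \<Longrightarrow> (\<And>n. Poly_Mapping.lookup f n \<in> M) \<Longrightarrow> Poly_Mapping.lookup (lsc sc p f) n
    = (\<Sum>i\<in>Poly_Mapping.keys p. sc (Poly_Mapping.lookup p i) (Poly_Mapping.lookup f (n - i)))"
  by (rule lookup_lsc_superset) auto

lemma lookup_lsc_single:
  "lmodule sc M \<Longrightarrow> (\<And>n. Poly_Mapping.lookup f n \<in> M) \<Longrightarrow>
    Poly_Mapping.lookup (lsc sc (Poly_Mapping.single m a) f) n = sc a (Poly_Mapping.lookup f (n - m))"
  by (subst lookup_lsc_superset[where S = "{m}"]) auto

lemma lookup_lsc_in:
  assumes M: "lmodule sc M" and f: "\<And>n. Poly_Mapping.lookup f n \<in> M"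
  shows "Poly_Mapping.lookup (lsc sc p f) n \<in> M"
  by (simp add: lookup_lsc[OF M f] f lmodule_sum[OF M] lmodule_scale[OF M])

lemma lsc_zero_left [simp]: "lsc sc 0 f = 0"
  by (simp add: lsc_def)

lemma lsc_add_right:
  assumes M: "lmodule sc M"
    and f: "\<And>n. Poly_Mapping.lookup f n \<in> M" and g: "\<And>n. Poly_Mapping.lookup g n \<in> M"
  shows "lsc sc p (f + g) = lsc sc p f + lsc sc p g"
proof (rule poly_mapping_eqI)
  fix n
  have fg: "\<And>n. Poly_Mapping.lookup (f + g) n \<in> M"
    by (simp add: lookup_add f g lmodule_add[OF M])
  show "Poly_Mapping.lookup (lsc sc p (f + g)) n = Poly_Mapping.lookup (lsc sc p f + lsc sc p g) n"
    by (simp add: lookup_lsc[OF M fg] lookup_lsc[OF M f] lookup_lsc[OF M g] lookup_add f g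
        lmodule_scale_add[OF M] sum.distrib)
qed

lemma lsc_add_left:
  assumes M: "lmodule sc M" and f: "\<And>n. Poly_Mapping.lookup f n \<in> M"
  shows "lsc sc (p + q) f = lsc sc p f + lsc sc q f"
proof (rule poly_mapping_eqI)
  fix n
  let ?S = "Poly_Mapping.keys p \<union> Poly_Mapping.keys q"
  have "Poly_Mapping.keys (p + q) \<subseteq> ?S"
    by (rule keys_add)
  then show "Poly_Mapping.lookup (lsc sc (p + q) f) n = Poly_Mapping.lookup (lsc sc p f + lsc sc q f) n"
    by (simp add: lookup_add lookup_lsc_superset[OF M f, where S = ?S] f
        lmodule_add_scale[OF M] sum.distrib)
qed

lemma poly_mapping_single_induct [case_names zero add_single]:
  assumes "P 0" and "\<And>p a b. P p \<Longrightarrow> P (p + Poly_Mapping.single a b)"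
  shows "P p"
proof (induction p rule: update_induct)
  case (update p a b)
  have "Poly_Mapping.update a b p = p + Poly_Mapping.single a b"
    using update.hyps(1)
    by (intro poly_mapping_eqI) (auto simp: lookup_update lookup_add lookup_single in_keys_iff)
  with update.IH assms(2) show ?case by simp
qed (rule assms(1))

lemma lsc_mult:
  assumes M: "lmodule sc M" and f: "\<And>n. Poly_Mapping.lookup f n \<in> M"
  shows "lsc sc (p * q) f = lsc sc p (lsc sc q f)"
proof (induction p rule: poly_mapping_single_induct)
  case (add_single p a b)
  have qf: "\<And>n. Poly_Mapping.lookup (lsc sc q f) n \<in> M"
    by (rule lookup_lsc_in[OF M f])
  have "lsc sc (Poly_Mapping.single a b * q) f = lsc sc (Poly_Mapping.single a b) (lsc sc q f)"
  proof (induction q rule: poly_mapping_single_induct)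
    case zero
    show ?case
      by (simp add: lsc_def)
  next
    case (add_single q c e)
    have ce: "\<And>n. Poly_Mapping.lookup (lsc sc (Poly_Mapping.single c e) f) n \<in> M"
      by (rule lookup_lsc_in[OF M f])
    have shift: "lsc sc (Poly_Mapping.single (a + c) (b * e)) f
        = lsc sc (Poly_Mapping.single a b) (lsc sc (Poly_Mapping.single c e) f)"
      by (intro poly_mapping_eqI)
        (simp add: lookup_lsc_single[OF M ce] lookup_lsc_single[OF M f] f lmodule_mult_scale[OF M]
          diff_diff_eq)
    show ?case
      by (simp add: distrib_left mult_single lsc_add_left[OF M f] lsc_add_right[OF M]
          lookup_lsc_in[OF M f] add_single shift)
  qed
  then show ?case
    by (simp add: distrib_right lsc_add_left[OF M f] lsc_add_left[OF M qf] add_single)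
qed simp

lemma lsc_one: "lmodule sc M \<Longrightarrow> (\<And>n. Poly_Mapping.lookup f n \<in> M) \<Longrightarrow> lsc sc 1 f = f"
  by (intro poly_mapping_eqI) (simp add: lookup_lsc_single lmodule_one_scale flip: single_one)

lemma lmodule_LC:
  assumes M: "lmodule sc (C k)"
  shows "lmodule (lsc sc) (LC C k)"
  unfolding lmodule_def Ball_def LC_iff
  by (auto simp: lookup_add lmodule_zero[OF M] lmodule_add[OF M] lmodule_uminus[OF M]
      lookup_lsc_in[OF M] lsc_add_right[OF M] lsc_add_left[OF M] lsc_mult[OF M] lsc_one[OF M])

lemma single_one_mult_commute:
  "Poly_Mapping.single k 1 * p = p * (Poly_Mapping.single k 1 :: 'a::comm_monoid_add \<Rightarrow>\<^sub>0 'b::ring_1)"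
proof (induction p rule: poly_mapping_single_induct)
  case (add_single p a b)
  then show ?case
    by (simp add: distrib_left distrib_right mult_single add.commute)
qed simp

lemma lookup_lmap: "a 0 = 0 \<Longrightarrow> Poly_Mapping.lookup (lmap a f) n = a (Poly_Mapping.lookup f n)"
  by (simp add: lmap_def Poly_Mapping.map.rep_eq when_def)

lemma linear_on_lmap:
  assumes a: "linear_on sc sc (C i) (D j) a" and C: "lmodule sc (C i)" and D: "lmodule sc (D j)"
  shows "linear_on (lsc sc) (lsc sc) (LC C i) (LC D j) (lmap a)"
  unfolding linear_on_def
proof (intro conjI ballI allI)
  have a0: "a 0 = 0"
    by (rule linear_on_zero[OF a C])
  fix f assume "f \<in> LC C i"
  then have f: "\<And>n. Poly_Mapping.lookup f n \<in> C i"
    by (simp add: LC_iff)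
  then have af: "\<And>n. Poly_Mapping.lookup (lmap a f) n \<in> D j"
    by (simp add: lookup_lmap a0 linear_on_in[OF a])
  then show "lmap a f \<in> LC D j"
    by (simp add: LC_iff)
  fix p
  show "lmap a (lsc sc p f) = lsc sc p (lmap a f)"
    by (intro poly_mapping_eqI)
      (simp add: lookup_lmap a0 lookup_lsc[OF C f] lookup_lsc[OF D af] linear_on_sum[OF a C] f
        lmodule_scale[OF C] linear_on_scale[OF a])
next
  fix f g assume "f \<in> LC C i" "g \<in> LC C i"
  then show "lmap a (f + g) = lmap a f + lmap a g"
    by (intro poly_mapping_eqI)
      (simp add: LC_iff lookup_lmap linear_on_zero[OF a C] lookup_add linear_on_add[OF a])
qed

lemma chain_complex_LC:
  assumes "chain_complex sc C d"
  shows "chain_complex (lsc sc) (LC C) (\<lambda>k. lmap (d k))"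
proof -
  have C: "\<And>k. lmodule sc (C k)" and d: "\<And>k. linear_on sc sc (C k) (C (k - 1)) (d k)"
    and dd: "\<And>k x. x \<in> C k \<Longrightarrow> d (k - 1) (d k x) = 0"
    using assms by (simp_all add: chain_complex_def)
  have d0: "\<And>k. d k 0 = 0"
    by (rule linear_on_zero[OF d C])
  show ?thesis
    unfolding chain_complex_def
    by (auto simp: lmodule_LC C linear_on_lmap C d LC_iff dd lookup_lmap d0
        linear_on_in[OF d] intro!: poly_mapping_eqI)
qed

lemma chain_map_lmap:
  assumes C: "chain_complex sc C d" and D: "chain_complex sc D e" and f: "chain_map sc sc C d D e f"
  shows "chain_map (lsc sc) (lsc sc) (LC C) (\<lambda>k. lmap (d k)) (LC D) (\<lambda>k. lmap (e k))
    (\<lambda>k. lmap (f k))"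
proof -
  have CM: "\<And>k. lmodule sc (C k)" and DM: "\<And>k. lmodule sc (D k)"
    and d: "\<And>k. linear_on sc sc (C k) (C (k - 1)) (d k)"
    and e: "\<And>k. linear_on sc sc (D k) (D (k - 1)) (e k)"
    and fl: "\<And>k. linear_on sc sc (C k) (D k) (f k)"
    and fc: "\<And>k x. x \<in> C k \<Longrightarrow> e k (f k x) = f (k - 1) (d k x)"
    using C D f by (simp_all add: chain_complex_def chain_map_def)
  have zero: "d k 0 = 0" "e k 0 = 0" "f k 0 = 0" for k
    using linear_on_zero[OF d CM] linear_on_zero[OF e DM] linear_on_zero[OF fl CM] by auto
  show ?thesis
    unfolding chain_map_def
    by (auto simp: linear_on_lmap CM DM fl LC_iff lookup_lmap zero fc intro!: poly_mapping_eqI)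
qed

lemma chain_homotopic_lmap:
  assumes C: "chain_complex sc C d" and D: "chain_complex sc D e"
    and fg: "chain_homotopic sc sc C d D e f g"
  shows "chain_homotopic (lsc sc) (lsc sc) (LC C) (\<lambda>k. lmap (d k)) (LC D) (\<lambda>k. lmap (e k))
    (\<lambda>k. lmap (f k)) (\<lambda>k. lmap (g k))"
proof -
  obtain s where sl: "\<And>k. linear_on sc sc (C k) (D (k + 1)) (s k)"
    and seq: "\<And>k x. x \<in> C k \<Longrightarrow> f k x - g k x = e (k + 1) (s k x) + s (k - 1) (d k x)"
    using fg unfolding chain_homotopic_def by blast
  have CM: "\<And>k. lmodule sc (C k)" and DM: "\<And>k. lmodule sc (D k)"
    and d: "\<And>k. linear_on sc sc (C k) (C (k - 1)) (d k)"
    and e: "\<And>k. linear_on sc sc (D k) (D (k - 1)) (e k)"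
    and fl: "\<And>k. linear_on sc sc (C k) (D k) (f k)" and gl: "\<And>k. linear_on sc sc (C k) (D k) (g k)"
    using C D fg by (simp_all add: chain_complex_def chain_map_def chain_homotopic_def)
  have zero: "d k 0 = 0" "e k 0 = 0" "f k 0 = 0" "g k 0 = 0" "s k 0 = 0" for k
    using linear_on_zero[OF d CM] linear_on_zero[OF e DM] linear_on_zero[OF fl CM]
      linear_on_zero[OF gl CM] linear_on_zero[OF sl CM] by auto
  have "\<forall>k. \<forall>x\<in>LC C k. lmap (f k) x - lmap (g k) x
      = lmap (e (k + 1)) (lmap (s k) x) + lmap (s (k - 1)) (lmap (d k) x)"
    by (auto simp: LC_iff lookup_lmap lookup_add lookup_minus zero seq intro!: poly_mapping_eqI)
  moreover have "\<forall>k. linear_on (lsc sc) (lsc sc) (LC C k) (LC D (k + 1)) (lmap (s k))"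
    by (simp add: linear_on_lmap CM DM sl)
  ultimately show ?thesis
    using chain_map_lmap[OF C D] fg unfolding chain_homotopic_def
    by (intro conjI exI[of _ "\<lambda>k. lmap (s k)"]) auto
qed

section \<open>Chain maps and homotopies\<close>

lemma chain_map_scale_central:
  assumes C: "chain_complex sc C d" and central: "\<And>b. a * b = b * a"
  shows "chain_map sc sc C d C d (\<lambda>k. sc a)"
proof -
  have CM: "\<And>k. lmodule sc (C k)" and d: "\<And>k. linear_on sc sc (C k) (C (k - 1)) (d k)"
    using C by (simp_all add: chain_complex_def)
  have "sc a (sc b x) = sc b (sc a x)" if "x \<in> C k" for b x k
    using that by (metis CM central lmodule_mult_scale)
  then show ?thesis
    unfolding chain_map_def linear_on_def
    by (simp add: lmodule_scale[OF CM] lmodule_scale_add[OF CM] linear_on_scale[OF d])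
qed

lemma chain_map_diff:
  assumes D: "chain_complex sc' D e"
    and f: "chain_map sc sc' C d D e f" and g: "chain_map sc sc' C d D e g"
  shows "chain_map sc sc' C d D e (\<lambda>k x. f k x - g k x)"
proof -
  have DM: "\<And>k. lmodule sc' (D k)" and e: "\<And>k. linear_on sc' sc' (D k) (D (k - 1)) (e k)"
    using D by (simp_all add: chain_complex_def)
  have fl: "\<And>k. linear_on sc sc' (C k) (D k) (f k)" and gl: "\<And>k. linear_on sc sc' (C k) (D k) (g k)"
    and fc: "\<And>k x. x \<in> C k \<Longrightarrow> e k (f k x) = f (k - 1) (d k x)"
    and gc: "\<And>k x. x \<in> C k \<Longrightarrow> e k (g k x) = g (k - 1) (d k x)"
    using f g by (simp_all add: chain_map_def)
  have "sc' a (f k x - g k x) = sc' a (f k x) - sc' a (g k x)" if "x \<in> C k" for a k x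
    by (rule lmodule_scale_diff[OF DM linear_on_in[OF fl that] linear_on_in[OF gl that]])
  then show ?thesis
    unfolding chain_map_def linear_on_def
    by (simp add: lmodule_diff[OF DM] linear_on_in[OF fl] linear_on_in[OF gl] linear_on_add[OF fl]
        linear_on_add[OF gl] linear_on_scale[OF fl] linear_on_scale[OF gl] lmodule_scale_diff[OF DM]
        linear_on_diff[OF e DM] fc gc)
qed

lemma chain_homotopic_diff_right:
  assumes D: "chain_complex sc' D e" and fg: "chain_homotopic sc sc' C d D e f g"
    and h: "chain_map sc sc' C d D e h"
  shows "chain_homotopic sc sc' C d D e (\<lambda>k x. f k x - h k x) (\<lambda>k x. g k x - h k x)"
  using fg chain_map_diff[OF D _ h] unfolding chain_homotopic_def by auto

lemma chain_homotopic_if_diff_null_homotopic: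
  assumes "chain_map sc sc' C d D e f" "chain_map sc sc' C d D e g"
    and "chain_homotopic sc sc' C d D e (\<lambda>k x. f k x - g k x) (\<lambda>k x. 0)"
  shows "chain_homotopic sc sc' C d D e f g"
  using assms unfolding chain_homotopic_def by auto

lemma quasi_iso_if_homotopic_to_iso:
  assumes C: "chain_complex sc C d" and D: "chain_complex sc' D e"
    and fu: "chain_homotopic sc sc' C d D e f u" and v: "chain_map sc' sc D e C d v"
    and vu: "\<And>k x. x \<in> C k \<Longrightarrow> v k (u k x) = x" and uv: "\<And>k y. y \<in> D k \<Longrightarrow> u k (v k y) = y"
  shows "quasi_iso sc sc' C d D e f"
proof -
  obtain s where sl: "\<And>k. linear_on sc sc' (C k) (D (k + 1)) (s k)"
    and seq: "\<And>k x. x \<in> C k \<Longrightarrow> f k x - u k x = e (k + 1) (s k x) + s (k - 1) (d k x)"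
    using fu unfolding chain_homotopic_def by blast
  have CM: "\<And>k. lmodule sc (C k)" and DM: "\<And>k. lmodule sc' (D k)"
    and e: "\<And>k. linear_on sc' sc' (D k) (D (k - 1)) (e k)"
    using C D by (simp_all add: chain_complex_def)
  have vl: "\<And>k. linear_on sc' sc (D k) (C k) (v k)"
    and vc: "\<And>k y. y \<in> D k \<Longrightarrow> d k (v k y) = v (k - 1) (e k y)"
    using v by (simp_all add: chain_map_def)
  have s0: "s k 0 = 0" and v0: "v k 0 = 0" for k
    using linear_on_zero[OF sl CM] linear_on_zero[OF vl DM] by auto
  have f_cycle: "f k w - u k w = e (k + 1) (s k w)" if "w \<in> C k" "d k w = 0" for k w
    using seq[OF that(1)] that(2) s0 by simp
  have "\<exists>w\<in>C k. d k w = 0 \<and> (\<exists>y\<in>D (k + 1). f k w - z = e (k + 1) y)"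
    if z: "z \<in> D k" "e k z = 0" for k z
  proof (intro bexI conjI)
    show w: "v k z \<in> C k"
      by (rule linear_on_in[OF vl z(1)])
    show "d k (v k z) = 0"
      using vc[OF z(1)] z(2) v0 by simp
    then show "f k (v k z) - z = e (k + 1) (s k (v k z))"
      using f_cycle[OF w] uv[OF z(1)] by simp
    show "s k (v k z) \<in> D (k + 1)"
      by (rule linear_on_in[OF sl w])
  qed
  moreover have "\<exists>c\<in>C (k + 1). w = d (k + 1) c"
    if w: "w \<in> C k" "d k w = 0" and y: "y \<in> D (k + 1)" "f k w = e (k + 1) y" for k w y
  proof
    have sw: "s k w \<in> D (k + 1)"
      by (rule linear_on_in[OF sl w(1)])
    have "u k w = e (k + 1) (y - s k w)"
      using f_cycle[OF w] y(2) linear_on_diff[OF e DM y(1) sw] by (simp add: algebra_simps)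
    then have "w = v k (e (k + 1) (y - s k w))"
      using vu[OF w(1)] by simp
    also have "\<dots> = d (k + 1) (v (k + 1) (y - s k w))"
      using vc[OF lmodule_diff[OF DM y(1) sw]] by simp
    finally show "w = d (k + 1) (v (k + 1) (y - s k w))" .
    show "v (k + 1) (y - s k w) \<in> C (k + 1)"
      by (rule linear_on_in[OF vl lmodule_diff[OF DM y(1) sw]])
  qed
  ultimately show ?thesis
    using fu unfolding quasi_iso_def chain_homotopic_def by blast
qed

section \<open>Mapping cones\<close>

definition pair_sc :: "('s \<Rightarrow> 'm \<Rightarrow> 'm) \<Rightarrow> 's \<Rightarrow> 'm \<times> 'm \<Rightarrow> 'm \<times> 'm" where
  "pair_sc sc a x = (sc a (fst x), sc a (snd x))"

lemma lmodule_Times: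
  assumes "lmodule sc A" and "lmodule sc B"
  shows "lmodule (pair_sc sc) (A \<times> B)"
  using assms unfolding lmodule_def pair_sc_def by (auto simp: zero_prod_def)

lemma lmodule_scale_uminus: "lmodule sc M \<Longrightarrow> x \<in> M \<Longrightarrow> sc a (- x) = - sc a x"
  using lmodule_scale_diff[of sc M 0 x a] by (simp add: lmodule_zero lmodule_scale_zero)

lemma cone_C_cases:
  assumes "x \<in> cone_C C B k"
  obtains c b where "x = (c, b)" "c \<in> C (k - 1)" "b \<in> B k"
  using assms by (cases x) (auto simp: cone_C_def)

lemma chain_complex_cone:
  assumes C: "chain_complex sc C d" and B: "chain_complex sc B e" and f: "chain_map sc sc C d B e f"
  shows "chain_complex (pair_sc sc) (cone_C C B) (cone_d d e f)"
proof -
  have CM: "\<And>k. lmodule sc (C k)" and BM: "\<And>k. lmodule sc (B k)"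
    and d: "\<And>k. linear_on sc sc (C k) (C (k - 1)) (d k)"
    and e: "\<And>k. linear_on sc sc (B k) (B (k - 1)) (e k)"
    and dd: "\<And>k x. x \<in> C k \<Longrightarrow> d (k - 1) (d k x) = 0"
    and ee: "\<And>k x. x \<in> B k \<Longrightarrow> e (k - 1) (e k x) = 0"
    using C B by (simp_all add: chain_complex_def)
  have fl: "\<And>k. linear_on sc sc (C k) (B k) (f k)"
    and fc: "\<And>k x. x \<in> C k \<Longrightarrow> e k (f k x) = f (k - 1) (d k x)"
    using f by (simp_all add: chain_map_def)
  have "linear_on (pair_sc sc) (pair_sc sc) (cone_C C B k) (cone_C C B (k - 1)) (cone_d d e f k)" for k
    unfolding linear_on_def
  proof (intro conjI ballI allI)
    fix x assume "x \<in> cone_C C B k"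
    then obtain c b where x: "x = (c, b)" and c: "c \<in> C (k - 1)" and b: "b \<in> B k"
      by (rule cone_C_cases)
    have dc: "d (k - 1) c \<in> C (k - 1 - 1)" and fc: "f (k - 1) c \<in> B (k - 1)"
      and eb: "e k b \<in> B (k - 1)"
      using linear_on_in[OF d c] linear_on_in[OF fl c] linear_on_in[OF e b] .
    show "cone_d d e f k x \<in> cone_C C B (k - 1)"
      using lmodule_uminus[OF CM dc] lmodule_add[OF BM fc eb] by (simp add: x cone_d_def cone_C_def)
    fix a
    show "cone_d d e f k (pair_sc sc a x) = pair_sc sc a (cone_d d e f k x)"
      by (simp add: x cone_d_def pair_sc_def linear_on_scale[OF d c] linear_on_scale[OF fl c]
          linear_on_scale[OF e b] lmodule_scale_uminus[OF CM dc] lmodule_scale_add[OF BM fc eb])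
  next
    fix x y assume "x \<in> cone_C C B k" "y \<in> cone_C C B k"
    then show "cone_d d e f k (x + y) = cone_d d e f k x + cone_d d e f k y"
      by (auto simp: cone_C_def cone_d_def linear_on_add[OF d] linear_on_add[OF fl] linear_on_add[OF e])
  qed
  moreover have "cone_d d e f (k - 1) (cone_d d e f k x) = 0" if xC: "x \<in> cone_C C B k" for k x
  proof -
    obtain c b where x: "x = (c, b)" and c: "c \<in> C (k - 1)" and b: "b \<in> B k"
      using xC by (rule cone_C_cases)
    have dc: "d (k - 1) c \<in> C (k - 1 - 1)"
      by (rule linear_on_in[OF d c])
    show ?thesis
      by (simp add: x cone_d_def zero_prod_def linear_on_uminus[OF d CM dc, simplified] dd[OF c, simplified]
          linear_on_uminus[OF fl CM dc, simplified]
          linear_on_add[OF e linear_on_in[OF fl c] linear_on_in[OF e b]]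
          fc[OF c] ee[OF b])
  qed
  ultimately show ?thesis
    unfolding chain_complex_def
    by (simp add: cone_C_def lmodule_Times CM BM)
qed

definition cone_ind :: "(int \<Rightarrow> 'm \<Rightarrow> 'n) \<Rightarrow> int \<Rightarrow> 'm \<times> 'm \<Rightarrow> 'n \<times> 'n" where
  "cone_ind a k x = (a (k - 1) (fst x), a k (snd x))"

lemma chain_map_cone_ind:
  assumes C: "chain_complex sc C d" and f: "chain_map sc sc C d C d f"
    and a: "chain_map sc sc C d D e a" and square: "\<And>k x. x \<in> C k \<Longrightarrow> a k (f k x) = g k (a k x)"
  shows "chain_map (pair_sc sc) (pair_sc sc) (cone_C C C) (cone_d d d f) (cone_C D D) (cone_d e e g)
    (cone_ind a)"
proof -
  have CM: "\<And>k. lmodule sc (C k)" and d: "\<And>k. linear_on sc sc (C k) (C (k - 1)) (d k)"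
    using C by (simp_all add: chain_complex_def)
  have fl: "\<And>k. linear_on sc sc (C k) (C k) (f k)"
    using f by (simp add: chain_map_def)
  have al: "\<And>k. linear_on sc sc (C k) (D k) (a k)"
    and ac: "\<And>k x. x \<in> C k \<Longrightarrow> e k (a k x) = a (k - 1) (d k x)"
    using a by (simp_all add: chain_map_def)
  have "cone_d e e g k (cone_ind a k x) = cone_ind a (k - 1) (cone_d d d f k x)"
    if xC: "x \<in> cone_C C C k" for k x
  proof -
    obtain c b where x: "x = (c, b)" and c: "c \<in> C (k - 1)" and b: "b \<in> C k"
      using xC by (rule cone_C_cases)
    show ?thesis
      by (simp add: x cone_d_def cone_ind_def linear_on_uminus[OF al CM linear_on_in[OF d c], simplified]
          linear_on_add[OF al linear_on_in[OF fl c] linear_on_in[OF d b]] square[OF c] ac c b)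
  qed
  then show ?thesis
    unfolding chain_map_def linear_on_def cone_C_def cone_ind_def pair_sc_def
    by (auto simp: linear_on_in[OF al] linear_on_add[OF al] linear_on_scale[OF al])
qed

lemma cone_ind_null_homotopic:
  assumes C: "chain_complex sc C d" and f: "chain_map sc sc C d C d f"
  shows "chain_homotopic (pair_sc sc) (pair_sc sc) (cone_C C C) (cone_d d d f) (cone_C C C) (cone_d d d f)
    (cone_ind f) (\<lambda>k x. 0)"
proof -
  have CM: "\<And>k. lmodule sc (C k)" and d: "\<And>k. linear_on sc sc (C k) (C (k - 1)) (d k)"
    using C by (simp_all add: chain_complex_def)
  have fl: "\<And>k. linear_on sc sc (C k) (C k) (f k)"
    using f by (simp add: chain_map_def)
  have zero: "d k 0 = 0" "f k 0 = 0" for k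
    using linear_on_zero[OF d CM] linear_on_zero[OF fl CM] by auto
  have "chain_map (pair_sc sc) (pair_sc sc) (cone_C C C) (cone_d d d f) (cone_C C C) (cone_d d d f)
      (\<lambda>k x. 0)"
    unfolding chain_map_def linear_on_def cone_C_def pair_sc_def cone_d_def
    by (simp add: zero_prod_def lmodule_zero[OF CM] lmodule_scale_zero[OF CM] zero)
  moreover have
    "linear_on (pair_sc sc) (pair_sc sc) (cone_C C C k) (cone_C C C (k + 1)) (\<lambda>x. (snd x, 0))"
    for k
    unfolding linear_on_def cone_C_def pair_sc_def
    by (auto simp: lmodule_zero[OF CM] lmodule_scale_zero[OF CM])
  moreover have "cone_ind f k x - 0 = cone_d d d f (k + 1) (snd x, 0) + (snd (cone_d d d f k x), 0)"
    for k x
    by (simp add: cone_ind_def cone_d_def zero)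
  ultimately show ?thesis
    using chain_map_cone_ind[OF C f f] unfolding chain_homotopic_def
    by (intro conjI exI[of _ "\<lambda>k x. (snd x, 0)"]) auto
qed

definition cone_shear :: "(int \<Rightarrow> 'm::plus \<Rightarrow> 'm) \<Rightarrow> int \<Rightarrow> 'm \<times> 'm \<Rightarrow> 'm \<times> 'm" where
  "cone_shear s k x = (fst x, snd x + s (k - 1) (fst x))"

lemma chain_map_cone_shear:
  assumes C: "chain_complex sc C d" and B: "chain_complex sc B e"
    and sl: "\<And>k. linear_on sc sc (C k) (B (k + 1)) (s k)"
    and seq: "\<And>k x. x \<in> C k \<Longrightarrow> g k x - h k x = e (k + 1) (s k x) + s (k - 1) (d k x)"
  shows "chain_map (pair_sc sc) (pair_sc sc) (cone_C C B) (cone_d d e g) (cone_C C B) (cone_d d e h)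
    (cone_shear s)"
proof -
  have CM: "\<And>k. lmodule sc (C k)" and BM: "\<And>k. lmodule sc (B k)"
    and d: "\<And>k. linear_on sc sc (C k) (C (k - 1)) (d k)"
    and e: "\<And>k. linear_on sc sc (B k) (B (k - 1)) (e k)"
    using C B by (simp_all add: chain_complex_def)
  have sl': "linear_on sc sc (C (k - 1)) (B k) (s (k - 1))" for k
    using sl[of "k - 1"] by simp
  have "linear_on (pair_sc sc) (pair_sc sc) (cone_C C B k) (cone_C C B k) (cone_shear s k)" for k
    unfolding linear_on_def
  proof (intro conjI ballI allI)
    fix x assume "x \<in> cone_C C B k"
    then obtain c b where x: "x = (c, b)" and c: "c \<in> C (k - 1)" and b: "b \<in> B k"
      by (rule cone_C_cases)
    have sc: "s (k - 1) c \<in> B k"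
      by (rule linear_on_in[OF sl' c])
    show "cone_shear s k x \<in> cone_C C B k"
      using c lmodule_add[OF BM b sc] by (simp add: x cone_shear_def cone_C_def)
    fix a
    show "cone_shear s k (pair_sc sc a x) = pair_sc sc a (cone_shear s k x)"
      by (simp add: x cone_shear_def pair_sc_def linear_on_scale[OF sl' c] lmodule_scale_add[OF BM b sc])
  next
    fix x y assume "x \<in> cone_C C B k" "y \<in> cone_C C B k"
    then show "cone_shear s k (x + y) = cone_shear s k x + cone_shear s k y"
      by (auto simp: cone_C_def cone_shear_def linear_on_add[OF sl'] algebra_simps)
  qed
  moreover have "cone_d d e h k (cone_shear s k x) = cone_shear s (k - 1) (cone_d d e g k x)"
    if xC: "x \<in> cone_C C B k" for k x
  proof -
    obtain c b where x: "x = (c, b)" and c: "c \<in> C (k - 1)" and b: "b \<in> B k"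
      using xC by (rule cone_C_cases)
    have "g (k - 1) c - h (k - 1) c = e k (s (k - 1) c) + s (k - 1 - 1) (d (k - 1) c)"
      using seq[OF c] by simp
    then show ?thesis
      by (simp add: x cone_d_def cone_shear_def linear_on_add[OF e b linear_on_in[OF sl' c]]
          linear_on_uminus[OF sl CM linear_on_in[OF d c], simplified] algebra_simps)
  qed
  ultimately show ?thesis
    unfolding chain_map_def by blast
qed

lemma chain_iso_cone_if_homotopic:
  assumes C: "chain_complex sc C d" and B: "chain_complex sc B e"
    and gh: "chain_homotopic sc sc C d B e g h"
  shows "chain_iso (pair_sc sc) (pair_sc sc) (cone_C C B) (cone_d d e g) (cone_C C B) (cone_d d e h)"
proof -
  obtain s where sl: "\<And>k. linear_on sc sc (C k) (B (k + 1)) (s k)"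
    and seq: "\<And>k x. x \<in> C k \<Longrightarrow> g k x - h k x = e (k + 1) (s k x) + s (k - 1) (d k x)"
    using gh unfolding chain_homotopic_def by blast
  have BM: "\<And>k. lmodule sc (B k)" and e: "\<And>k. linear_on sc sc (B k) (B (k - 1)) (e k)"
    using B by (simp_all add: chain_complex_def)
  let ?t = "\<lambda>k x. - s k x"
  have "linear_on sc sc (C k) (B (k + 1)) (?t k)" for k
    unfolding linear_on_def
  proof (intro conjI ballI allI)
    fix x assume x: "x \<in> C k"
    show "- s k x \<in> B (k + 1)"
      by (rule lmodule_uminus[OF BM linear_on_in[OF sl x]])
    fix a
    show "- s k (sc a x) = sc a (- s k x)"
      by (simp add: linear_on_scale[OF sl x] lmodule_scale_uminus[OF BM linear_on_in[OF sl x]])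
  qed (simp add: linear_on_add[OF sl])
  moreover have "h k x - g k x = e (k + 1) (?t k x) + ?t (k - 1) (d k x)" if "x \<in> C k" for k x
    using seq[OF that] linear_on_uminus[OF e BM linear_on_in[OF sl that]] by (simp add: algebra_simps)
  ultimately have "chain_map (pair_sc sc) (pair_sc sc) (cone_C C B) (cone_d d e h) (cone_C C B)
      (cone_d d e g) (cone_shear ?t)"
    by (rule chain_map_cone_shear[OF C B])
  then show ?thesis
    unfolding chain_iso_def
    by (intro exI[of _ "cone_shear s"] exI[of _ "cone_shear ?t"])
      (simp add: chain_map_cone_shear[OF C B sl seq] cone_shear_def)
qed

section \<open>Mapping tori\<close>

lemma tsc_eq_pair_sc: "tsc sc = pair_sc (lsc sc)"
  by (simp add: fun_eq_iff tsc_def pair_sc_def)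

lemma chain_map_scale_lx:
  assumes "chain_complex sc C d"
  shows "chain_map sc sc C d C d (\<lambda>k. sc (lx :: 'r::ring_1 laurent))"
  by (rule chain_map_scale_central[OF assms]) (simp add: lx_def single_one_mult_commute)

lemma chain_map_lmap_minus_lx:
  assumes C: "chain_complex sc C d" and h: "chain_map sc sc C d C d h"
  shows "chain_map (lsc sc) (lsc sc) (LC C) (\<lambda>k. lmap (d k)) (LC C) (\<lambda>k. lmap (d k))
    (\<lambda>k c. lmap (h k) c - lsc sc lx c)"
  using chain_map_diff[OF chain_complex_LC[OF C] chain_map_lmap[OF C C h]
      chain_map_scale_lx[OF chain_complex_LC[OF C]]] .

lemma torus_chain_complex:
  assumes C: "chain_complex sc C d" and h: "chain_map sc sc C d C d h"
  shows "chain_complex (tsc sc) (torus_C C) (torus_d sc d h)"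
  unfolding tsc_eq_pair_sc torus_C_def torus_d_def
  by (rule chain_complex_cone[OF chain_complex_LC[OF C] chain_complex_LC[OF C]
        chain_map_lmap_minus_lx[OF C h]])

lemma torus_ind_chain_map:
  assumes C: "chain_complex sc C d" and h: "chain_map sc sc C d C d h"
  shows "chain_map (tsc sc) (tsc sc) (torus_C C) (torus_d sc d h) (torus_C C) (torus_d sc d h)
    (torus_ind h)"
proof -
  have hl: "linear_on (lsc sc) (lsc sc) (LC C k) (LC C k) (lmap (h k))" for k
    using chain_map_lmap[OF C C h] by (simp add: chain_map_def)
  have LM: "lmodule (lsc sc) (LC C k)" for k
    using chain_complex_LC[OF C] by (simp add: chain_complex_def)
  have "torus_ind h = cone_ind (\<lambda>k. lmap (h k))"
    by (simp add: fun_eq_iff torus_ind_def cone_ind_def)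
  moreover have "lmap (h k) (lmap (h k) c - lsc sc lx c)
      = lmap (h k) (lmap (h k) c) - lsc sc lx (lmap (h k) c)"
    if "c \<in> LC C k" for k c
    using that by (simp add: linear_on_diff[OF hl LM] linear_on_in[OF hl] lmodule_scale[OF LM]
        linear_on_scale[OF hl])
  ultimately show ?thesis
    unfolding tsc_eq_pair_sc torus_C_def torus_d_def
    by (simp add: chain_map_cone_ind[OF chain_complex_LC[OF C] chain_map_lmap_minus_lx[OF C h]
          chain_map_lmap[OF C C h]])
qed

lemma torus_ind_homotopic_lx:
  assumes C: "chain_complex sc C d" and h: "chain_map sc sc C d C d h"
  shows "chain_homotopic (tsc sc) (tsc sc) (torus_C C) (torus_d sc d h) (torus_C C) (torus_d sc d h)
    (torus_ind h) (\<lambda>k. tsc sc lx)"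
proof (rule chain_homotopic_if_diff_null_homotopic)
  show "chain_map (tsc sc) (tsc sc) (torus_C C) (torus_d sc d h) (torus_C C) (torus_d sc d h)
      (torus_ind h)"
    by (rule torus_ind_chain_map[OF C h])
  show "chain_map (tsc sc) (tsc sc) (torus_C C) (torus_d sc d h) (torus_C C) (torus_d sc d h)
      (\<lambda>k. tsc sc lx)"
    by (rule chain_map_scale_lx[OF torus_chain_complex[OF C h]])
  have "(\<lambda>k x. torus_ind h k x - tsc sc lx x) = cone_ind (\<lambda>k c. lmap (h k) c - lsc sc lx c)"
    by (simp add: fun_eq_iff torus_ind_def cone_ind_def tsc_def)
  then show "chain_homotopic (tsc sc) (tsc sc) (torus_C C) (torus_d sc d h) (torus_C C) (torus_d sc d h)
      (\<lambda>k x. torus_ind h k x - tsc sc lx x) (\<lambda>k x. 0)"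
    unfolding tsc_eq_pair_sc torus_C_def torus_d_def
    using cone_ind_null_homotopic[OF chain_complex_LC[OF C] chain_map_lmap_minus_lx[OF C h]]
    by simp
qed

lemma torus_ind_quasi_iso:
  fixes sc :: "'r::ring_1 \<Rightarrow> 'm::ab_group_add \<Rightarrow> 'm"
  assumes C: "chain_complex sc C d" and h: "chain_map sc sc C d C d h"
  shows "quasi_iso (tsc sc) (tsc sc) (torus_C C) (torus_d sc d h) (torus_C C) (torus_d sc d h)
    (torus_ind h)"
proof -
  let ?xinv = "Poly_Mapping.single (-1) 1 :: 'r laurent"
  have T: "chain_complex (tsc sc) (torus_C C) (torus_d sc d h)"
    by (rule torus_chain_complex[OF C h])
  then have TM: "lmodule (tsc sc) (torus_C C k)" for k
    by (simp add: chain_complex_def)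
  have "chain_map (tsc sc) (tsc sc) (torus_C C) (torus_d sc d h) (torus_C C) (torus_d sc d h)
      (\<lambda>k. tsc sc ?xinv)"
    by (rule chain_map_scale_central[OF T]) (simp add: single_one_mult_commute)
  moreover have "?xinv * lx = 1" "lx * ?xinv = 1"
    by (simp_all add: lx_def mult_single)
  ultimately show ?thesis
    using quasi_iso_if_homotopic_to_iso[OF T T torus_ind_homotopic_lx[OF C h]]
    by (simp add: lmodule_scale_inverse[OF TM])
qed

lemma torus_iso_if_homotopic:
  assumes C: "chain_complex sc C d" and gh: "chain_homotopic sc sc C d C d g h"
  shows "chain_iso (tsc sc) (tsc sc) (torus_C C) (torus_d sc d g) (torus_C C) (torus_d sc d h)"
proof -
  have LC: "chain_complex (lsc sc) (LC C) (\<lambda>k. lmap (d k))"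
    by (rule chain_complex_LC[OF C])
  show ?thesis
    unfolding tsc_eq_pair_sc torus_C_def torus_d_def
    by (rule chain_iso_cone_if_homotopic[OF LC LC chain_homotopic_diff_right[OF LC
          chain_homotopic_lmap[OF C C gh] chain_map_scale_lx[OF LC]]])
qed

theorem lemma2p6:
  fixes sc :: "'r::ring_1 \<Rightarrow> 'm::ab_group_add \<Rightarrow> 'm"
    and C :: "int \<Rightarrow> 'm set" and d :: "int \<Rightarrow> 'm \<Rightarrow> 'm"
  assumes "chain_complex sc C d"
  shows "(\<forall>h. chain_map sc sc C d C d h \<longrightarrow>
            chain_homotopic (tsc sc) (tsc sc) (torus_C C) (torus_d sc d h) (torus_C C) (torus_d sc d h)
              (torus_ind h) (\<lambda>k. tsc sc lx) \<and>
            quasi_iso (tsc sc) (tsc sc) (torus_C C) (torus_d sc d h) (torus_C C) (torus_d sc d h)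
              (torus_ind h))
       \<and> (\<forall>g h. chain_homotopic sc sc C d C d g h \<longrightarrow>
            chain_iso (tsc sc) (tsc sc) (torus_C C) (torus_d sc d g) (torus_C C) (torus_d sc d h))"
  using torus_ind_homotopic_lx[OF assms] torus_ind_quasi_iso[OF assms] torus_iso_if_homotopic[OF assms]
  by blast

end
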